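(* Let $D$ be a Dedekind domain with quotient field $K$, $M$ a maximal ideal of $D$ of finite index, $\hat D$ the $M$-adic completion of $D$, $n\ge1$, and $C\in M_n(\hat D)$. Then $\{f(C)\mid f\in\mathrm{Int}_K(M_n(D))\}\subseteq \hat D[C]=\{s(C)\mid s\in\hat D[x]\}$.
   Context: $\mathrm{Int}_K(M_n(D))=\{f\in K[x]\mid f(C)\in M_n(D)\text{ for all }C\in M_n(D)\}$. For $f=g/d$ with $g\in D[x]$, $d\in D\setminus\{0\}$ and $C\in M_n(\hat D)$, $f(C)=d^{-1}g(C)$ computed over the quotient field of $\hat D$. *)

theory Defs
  imports "HOL-Analysis.Analysis" "HOL-Computational_Algebra.Fraction_Field"
    "HOL-Computational_Algebra.Polynomial_Factorial"
begin

definition is_ideal :: "'a::comm_ring_1 set \<Rightarrow> bool" where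
  "is_ideal I \<longleftrightarrow> 0 \<in> I \<and> (\<forall>x\<in>I. \<forall>y\<in>I. x + y \<in> I) \<and> (\<forall>r. \<forall>x\<in>I. r * x \<in> I)"

definition is_prime_ideal :: "'a::comm_ring_1 set \<Rightarrow> bool" where
  "is_prime_ideal P \<longleftrightarrow> is_ideal P \<and> P \<noteq> UNIV \<and> (\<forall>a b. a * b \<in> P \<longrightarrow> a \<in> P \<or> b \<in> P)"

definition is_maximal_ideal :: "'a::comm_ring_1 set \<Rightarrow> bool" where
  "is_maximal_ideal M \<longleftrightarrow> is_ideal M \<and> M \<noteq> UNIV \<and>
     (\<forall>J. is_ideal J \<and> M \<subseteq> J \<longrightarrow> J = M \<or> J = UNIV)"

text \<open>Finite index: the quotient ring D/M (the set of cosets x + M) is finite.\<close>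
definition finite_index :: "'a::comm_ring_1 set \<Rightarrow> bool" where
  "finite_index M \<longleftrightarrow> finite ((\<lambda>x. (\<lambda>m. x + m) ` M) ` UNIV)"

definition ideal_prod :: "'a::comm_ring_1 set \<Rightarrow> 'a set \<Rightarrow> 'a set" where
  "ideal_prod I J = {x. \<exists>(m::nat) f g. (\<forall>i<m. f i \<in> I \<and> g i \<in> J) \<and> x = (\<Sum>i<m. f i * g i)}"

fun ideal_pow :: "'a::comm_ring_1 set \<Rightarrow> nat \<Rightarrow> 'a set" where
  "ideal_pow M 0 = UNIV"
| "ideal_pow M (Suc k) = ideal_prod M (ideal_pow M k)"

definition noetherian_ring :: "'a::comm_ring_1 itself \<Rightarrow> bool" where
  "noetherian_ring _ \<longleftrightarrow> (\<forall>I :: nat \<Rightarrow> 'a set. (\<forall>i. is_ideal (I i) \<and> I i \<subseteq> I (Suc i))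
      \<longrightarrow> (\<exists>N. \<forall>i\<ge>N. I i = I N))"

definition integral_over_dom :: "'a::idom fract \<Rightarrow> bool" where
  "integral_over_dom x \<longleftrightarrow> (\<exists>p :: 'a poly. lead_coeff p = 1 \<and> poly (map_poly to_fract p) x = 0)"

definition integrally_closed :: "'a::idom itself \<Rightarrow> bool" where
  "integrally_closed _ \<longleftrightarrow> (\<forall>x :: 'a fract. integral_over_dom x \<longrightarrow> x \<in> range to_fract)"

definition dedekind_domain :: "'a::idom itself \<Rightarrow> bool" where
  "dedekind_domain T \<longleftrightarrow> noetherian_ring T \<and> integrally_closed T \<and>
     (\<forall>P :: 'a set. is_prime_ideal P \<and> P \<noteq> {0} \<longrightarrow> is_maximal_ideal P)"

fun matpow :: "'a::comm_ring_1^'n^'n \<Rightarrow> nat \<Rightarrow> 'a^'n^'n" where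
  "matpow A 0 = mat 1"
| "matpow A (Suc j) = A ** matpow A j"

definition smat :: "'a::times \<Rightarrow> 'a^'n^'n \<Rightarrow> 'a^'n^'n" where
  "smat c A = (\<chi> i j. c * A $ i $ j)"

definition poly_mat :: "'a::comm_ring_1 poly \<Rightarrow> 'a^'n^'n \<Rightarrow> 'a^'n^'n" where
  "poly_mat p A = (\<Sum>j\<le>degree p. smat (coeff p j) (matpow A j))"

definition Int_K_Mn :: "'n::finite itself \<Rightarrow> ('a::idom fract) poly set" where
  "Int_K_Mn _ = {f. \<forall>A :: 'a^'n^'n. \<forall>i j.
      poly_mat f (\<chi> i j. to_fract (A $ i $ j)) $ i $ j \<in> range to_fract}"

text \<open>The M-adic completion of D is realised as the inverse limit of the D/M^k: an element
  is a sequence x with x (k+1) congruent to x k modulo M^k (x k represents the component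
  in D/M^k), and two sequences represent the same element iff x k - y k \<in> M^k for all k.
  Likewise an n x n matrix over the completion is a compatible sequence of matrices over D
  (M_n of the inverse limit is the inverse limit of the M_n(D/M^k)).\<close>

definition hat_elem :: "'a::comm_ring_1 set \<Rightarrow> (nat \<Rightarrow> 'a) \<Rightarrow> bool" where
  "hat_elem M x \<longleftrightarrow> (\<forall>k. x (Suc k) - x k \<in> ideal_pow M k)"

definition hat_mat :: "'a::comm_ring_1 set \<Rightarrow> (nat \<Rightarrow> 'a^'n^'n) \<Rightarrow> bool" where
  "hat_mat M C \<longleftrightarrow> (\<forall>i j. hat_elem M (\<lambda>k. C k $ i $ j))"

definition hat_mat_eq :: "'a::comm_ring_1 set \<Rightarrow> (nat \<Rightarrow> 'a^'n^'n) \<Rightarrow> (nat \<Rightarrow> 'a^'n^'n) \<Rightarrow> bool" where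
  "hat_mat_eq M X Y \<longleftrightarrow> (\<forall>k i j. X k $ i $ j - Y k $ i $ j \<in> ideal_pow M k)"

text \<open>A polynomial over the completion is given by its list of coefficients (each an element
  of the completion); its value at a matrix C over the completion is computed componentwise.\<close>
definition hat_poly_mat :: "(nat \<Rightarrow> 'a::comm_ring_1) list \<Rightarrow> (nat \<Rightarrow> 'a^'n^'n) \<Rightarrow> nat \<Rightarrow> 'a^'n^'n" where
  "hat_poly_mat cs C = (\<lambda>k. \<Sum>j<length cs. smat ((cs ! j) k) (matpow (C k) j))"

definition D_poly_hat_mat :: "'a::comm_ring_1 poly \<Rightarrow> (nat \<Rightarrow> 'a^'n^'n) \<Rightarrow> nat \<Rightarrow> 'a^'n^'n" where
  "D_poly_hat_mat g C = (\<lambda>k. poly_mat g (C k))"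

definition scal_hat_mat :: "'a::comm_ring_1 \<Rightarrow> (nat \<Rightarrow> 'a^'n^'n) \<Rightarrow> nat \<Rightarrow> 'a^'n^'n" where
  "scal_hat_mat d X = (\<lambda>k. smat d (X k))"

text \<open>f(C) \<in> D-hat[C] for f = g/d: by the convention f(C) = d^{-1} g(C) (computed in the
  quotient field of the domain D-hat) this means g(C) = d * s(C) for some s \<in> D-hat[x].\<close>
definition frac_val_in_hat_alg :: "'a::comm_ring_1 set \<Rightarrow> 'a poly \<Rightarrow> 'a \<Rightarrow> (nat \<Rightarrow> 'a^'n^'n) \<Rightarrow> bool" where
  "frac_val_in_hat_alg M g d C \<longleftrightarrow> (\<exists>cs. (\<forall>c\<in>set cs. hat_elem M c) \<and>
      hat_mat_eq M (D_poly_hat_mat g C) (scal_hat_mat d (hat_poly_mat cs C)))"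

end

theory Submission
  imports Defs
begin

text \<open>
  The proof has two ingredients.  (1) An exact statement over \<open>D\<close>: if \<open>d\<close> divides all
  entries of \<open>g(B)\<close> for every \<open>B \<in> M\<^sub>n(D)\<close>, then for every \<open>A\<close> we have \<open>g(A) = d s(A)\<close> with
  \<open>s \<in> D[x]\<close> of degree \<open>< n\<close>.  Indeed, \<open>g(A) = r(A)\<close> for the remainder \<open>r\<close> of \<open>g\<close> modulo
  the (monic) characteristic polynomial \<open>\<chi>\<^sub>A\<close> by Cayley--Hamilton, and evaluating \<open>g\<close> at the
  companion matrix of \<open>\<chi>\<^sub>A\<close> exhibits the coefficients of \<open>r\<close> as entries of a value of \<open>g\<close>,
  so \<open>d\<close> divides them.  (2) A compactness argument: the polynomials \<open>s\<^sub>K\<close> obtained at the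
  levels \<open>C\<^sub>K\<close> need not be coherent, but since every \<open>D/M\<^sup>k\<close> is finite (\<open>D\<close> is Noetherian),
  Koenig's lemma yields a coherent coefficient sequence approximating them, i.e. an
  \<open>s \<in> \<hat>D[x]\<close> of degree \<open>< n\<close> with \<open>g(C) = d s(C)\<close>.
\<close>

section \<open>Ideals and their powers\<close>

lemma ideal_0: "is_ideal I \<Longrightarrow> 0 \<in> I"
  by (simp add: is_ideal_def)

lemma ideal_add: "is_ideal I \<Longrightarrow> x \<in> I \<Longrightarrow> y \<in> I \<Longrightarrow> x + y \<in> I"
  by (simp add: is_ideal_def)

lemma ideal_lmult: "is_ideal I \<Longrightarrow> x \<in> I \<Longrightarrow> r * x \<in> I"
  by (simp add: is_ideal_def)

lemma ideal_rmult: "is_ideal I \<Longrightarrow> x \<in> I \<Longrightarrow> x * r \<in> I"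
  using ideal_lmult[of I x r] by (simp add: mult.commute)

lemma ideal_uminus: "is_ideal I \<Longrightarrow> x \<in> I \<Longrightarrow> - x \<in> I"
  using ideal_lmult[of I x "-1"] by simp

lemma ideal_diff: "is_ideal I \<Longrightarrow> x \<in> I \<Longrightarrow> y \<in> I \<Longrightarrow> x - y \<in> I"
  using ideal_add[of I x "-y"] ideal_uminus[of I y] by simp

lemma ideal_sum: "is_ideal I \<Longrightarrow> (\<And>i. i \<in> S \<Longrightarrow> f i \<in> I) \<Longrightarrow> sum f S \<in> I"
  by (induction S rule: infinite_finite_induct) (simp_all add: ideal_0 ideal_add)

lemma ideal_prod_ideal:
  assumes I: "is_ideal I"
  shows "is_ideal (ideal_prod I J)"
  unfolding is_ideal_def
proof (intro conjI ballI allI)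
  show "0 \<in> ideal_prod I J"
    unfolding ideal_prod_def by (rule CollectI, rule exI[of _ 0]) simp
next
  fix x y assume "x \<in> ideal_prod I J" "y \<in> ideal_prod I J"
  then obtain m m' :: nat and f g f' g'
    where fg: "\<forall>i<m. f i \<in> I \<and> g i \<in> J" "x = (\<Sum>i<m. f i * g i)"
      and fg': "\<forall>i<m'. f' i \<in> I \<and> g' i \<in> J" "y = (\<Sum>i<m'. f' i * g' i)"
    unfolding ideal_prod_def by blast
  define F where "F i = (if i < m then f i else f' (i - m))" for i
  define G where "G i = (if i < m then g i else g' (i - m))" for i
  have "(\<Sum>i<m + m'. F i * G i) = (\<Sum>i<m. F i * G i) + (\<Sum>i<m'. F (m + i) * G (m + i))"
    by (induction m') (simp_all add: add.assoc)
  also have "\<dots> = x + y"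
    unfolding fg(2) fg'(2) F_def G_def by simp
  finally have "x + y = (\<Sum>i<m + m'. F i * G i)" by simp
  moreover have "\<forall>i<m + m'. F i \<in> I \<and> G i \<in> J"
    using fg(1) fg'(1) unfolding F_def G_def by auto
  ultimately show "x + y \<in> ideal_prod I J"
    unfolding ideal_prod_def by blast
next
  fix r x assume "x \<in> ideal_prod I J"
  then obtain m :: nat and f g where fg: "\<forall>i<m. f i \<in> I \<and> g i \<in> J" "x = (\<Sum>i<m. f i * g i)"
    unfolding ideal_prod_def by blast
  have "r * x = (\<Sum>i<m. (r * f i) * g i)"
    unfolding fg(2) by (simp add: sum_distrib_left mult.assoc)
  moreover have "\<forall>i<m. r * f i \<in> I \<and> g i \<in> J"
    using fg(1) ideal_lmult[OF I] by auto
  ultimately show "r * x \<in> ideal_prod I J"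
    unfolding ideal_prod_def
    by (intro CollectI exI[of _ m] exI[of _ "\<lambda>i. r * f i"] exI[of _ g]) simp
qed

lemma ideal_prod_subset:
  assumes J: "is_ideal J"
  shows "ideal_prod I J \<subseteq> J"
proof
  fix x assume "x \<in> ideal_prod I J"
  then obtain m :: nat and f g where fg: "\<forall>i<m. f i \<in> I \<and> g i \<in> J" "x = (\<Sum>i<m. f i * g i)"
    unfolding ideal_prod_def by blast
  show "x \<in> J"
    unfolding fg(2) by (rule ideal_sum[OF J]) (use fg(1) ideal_lmult[OF J] in auto)
qed

lemma ideal_prod_mem: "a \<in> I \<Longrightarrow> b \<in> J \<Longrightarrow> a * b \<in> ideal_prod I J"
  unfolding ideal_prod_def
  by (rule CollectI, rule exI[of _ 1], rule exI[of _ "\<lambda>_. a"], rule exI[of _ "\<lambda>_. b"]) simp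

lemma ideal_pow_ideal: "is_ideal M \<Longrightarrow> is_ideal (ideal_pow M k)"
proof (cases k)
  case 0
  then show ?thesis by (simp add: is_ideal_def)
qed (simp add: ideal_prod_ideal)

lemma ideal_pow_Suc_subset: "is_ideal M \<Longrightarrow> ideal_pow M (Suc k) \<subseteq> ideal_pow M k"
  by (simp add: ideal_prod_subset ideal_pow_ideal)

lemma ideal_pow_antimono:
  assumes "is_ideal M" "k \<le> K"
  shows "ideal_pow M K \<subseteq> ideal_pow M k"
  using assms(2)
proof (induction K rule: dec_induct)
  case (step K)
  then show ?case using ideal_pow_Suc_subset[OF assms(1), of K] by blast
qed simp

definition finite_residues :: "'a::comm_ring_1 set \<Rightarrow> bool" where
  "finite_residues I \<longleftrightarrow> (\<exists>R. finite R \<and> (\<forall>x. \<exists>r\<in>R. x - r \<in> I))"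

lemma finite_residues_if_finite_index:
  assumes M: "is_ideal M" and fi: "finite_index M"
  shows "finite_residues M"
proof -
  define R where "R = (\<lambda>c. SOME y. y \<in> c) ` ((\<lambda>x. (\<lambda>m. x + m) ` M) ` UNIV)"
  have "finite R"
    using fi by (simp add: R_def finite_index_def)
  moreover have "\<exists>r\<in>R. x - r \<in> M" for x
  proof -
    define c where "c = (\<lambda>m. x + m) ` M"
    have "x \<in> c"
      using ideal_0[OF M] unfolding c_def by (metis add_0_right image_eqI)
    hence "(SOME y. y \<in> c) \<in> c" by (rule someI)
    then obtain m where m: "m \<in> M" "(SOME y. y \<in> c) = x + m"
      unfolding c_def by blast
    have "x - (SOME y. y \<in> c) \<in> M"
      using ideal_uminus[OF M m(1)] m(2) by simp
    moreover have "(SOME y. y \<in> c) \<in> R"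
      by (simp add: R_def c_def)
    ultimately show ?thesis by blast
  qed
  ultimately show ?thesis
    unfolding finite_residues_def by blast
qed

definition span_list :: "'a::comm_ring_1 list \<Rightarrow> 'a set" where
  "span_list bs = {x. \<exists>r. x = (\<Sum>i<length bs. r i * bs ! i)}"

lemma span_list_ideal: "is_ideal (span_list bs)"
  unfolding is_ideal_def span_list_def
proof (intro conjI ballI allI)
  show "0 \<in> {x. \<exists>r. x = (\<Sum>i<length bs. r i * bs ! i)}"
    by (rule CollectI, rule exI[of _ "\<lambda>_. 0"]) simp
next
  fix x y
  assume "x \<in> {x. \<exists>r. x = (\<Sum>i<length bs. r i * bs ! i)}"
    and "y \<in> {x. \<exists>r. x = (\<Sum>i<length bs. r i * bs ! i)}"
  then obtain r r' where "x = (\<Sum>i<length bs. r i * bs ! i)" "y = (\<Sum>i<length bs. r' i * bs ! i)"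
    by blast
  hence "x + y = (\<Sum>i<length bs. (r i + r' i) * bs ! i)"
    by (simp add: sum.distrib distrib_right)
  thus "x + y \<in> {x. \<exists>r. x = (\<Sum>i<length bs. r i * bs ! i)}"
    by (intro CollectI exI[of _ "\<lambda>i. r i + r' i"])
next
  fix s x
  assume "x \<in> {x. \<exists>r. x = (\<Sum>i<length bs. r i * bs ! i)}"
  then obtain r where "x = (\<Sum>i<length bs. r i * bs ! i)" by blast
  hence "s * x = (\<Sum>i<length bs. (s * r i) * bs ! i)"
    by (simp add: sum_distrib_left mult.assoc)
  thus "s * x \<in> {x. \<exists>r. x = (\<Sum>i<length bs. r i * bs ! i)}"
    by (intro CollectI exI[of _ "\<lambda>i. s * r i"])
qed

lemma span_list_snoc_mono: "span_list bs \<subseteq> span_list (bs @ [y])"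
proof
  fix x assume "x \<in> span_list bs"
  then obtain r where r: "x = (\<Sum>i<length bs. r i * bs ! i)"
    unfolding span_list_def by blast
  define r' where "r' i = (if i < length bs then r i else 0)" for i
  have "(\<Sum>i<length (bs @ [y]). r' i * (bs @ [y]) ! i) = x"
    unfolding r by (simp add: r'_def nth_append)
  thus "x \<in> span_list (bs @ [y])"
    unfolding span_list_def by (metis (mono_tags, lifting) mem_Collect_eq)
qed

lemma span_list_snoc_mem: "(y::'a::comm_ring_1) \<in> span_list (bs @ [y])"
proof -
  define r where "r i = (if i = length bs then 1 else (0::'a))" for i
  have "(\<Sum>i<length (bs @ [y]). r i * (bs @ [y]) ! i) = y"
    by (simp add: r_def)
  thus ?thesis
    unfolding span_list_def by (metis (mono_tags, lifting) mem_Collect_eq)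
qed

text \<open>In a Noetherian ring every ideal is finitely generated: otherwise adding one new
  element at a time would give a strictly ascending chain of ideals.\<close>
lemma noetherian_finitely_generated:
  assumes noeth: "noetherian_ring TYPE('a::comm_ring_1)" and I: "is_ideal (I :: 'a set)"
  shows "\<exists>bs. set bs \<subseteq> I \<and> I \<subseteq> span_list bs"
proof (rule ccontr)
  assume not_fg: "\<not> ?thesis"
  define new where "new l = (SOME x. x \<in> I \<and> x \<notin> span_list l)" for l :: "'a list"
  have new: "new l \<in> I \<and> new l \<notin> span_list l" if "set l \<subseteq> I" for l
  proof -
    have "\<exists>x. x \<in> I \<and> x \<notin> span_list l" using not_fg that by blast
    thus ?thesis unfolding new_def by (rule someI_ex)
  qed
  define L where "L = rec_nat [] (\<lambda>n l. l @ [new l])"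
  have L_0: "L 0 = []" and L_Suc: "L (Suc n) = L n @ [new (L n)]" for n
    by (simp_all add: L_def)
  have L_in: "set (L n) \<subseteq> I" for n
    by (induction n) (simp_all add: L_0 L_Suc new)
  have "\<forall>i. is_ideal (span_list (L i)) \<and> span_list (L i) \<subseteq> span_list (L (Suc i))"
    by (simp add: span_list_ideal L_Suc span_list_snoc_mono)
  then obtain N where N: "\<forall>i\<ge>N. span_list (L i) = span_list (L N)"
    using noeth[unfolded noetherian_ring_def, rule_format, of "\<lambda>i. span_list (L i)"] by blast
  have "new (L N) \<in> span_list (L (Suc N))"
    by (simp add: L_Suc span_list_snoc_mem)
  with N[rule_format, of "Suc N"] have "new (L N) \<in> span_list (L N)" by simp
  with new[OF L_in] show False by blast
qed

text \<open>If \<open>J\<close> is finitely generated, residues modulo \<open>M\<close> and modulo \<open>J\<close> combine to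
  residues modulo \<open>M J\<close>: \<open>x = r + \<Sum> a\<^sub>i b\<^sub>i\<close> and each \<open>a\<^sub>i\<close> may be reduced modulo \<open>M\<close>.\<close>
lemma finite_residues_prod:
  assumes M: "is_ideal M" and RM: "finite_residues M" and RJ: "finite_residues J"
    and gens: "set bs \<subseteq> J" "J \<subseteq> span_list bs"
  shows "finite_residues (ideal_prod M J)"
proof -
  obtain R1 where R1: "finite R1" "\<And>x. \<exists>r\<in>R1. x - r \<in> M"
    using RM unfolding finite_residues_def by blast
  obtain R where R: "finite R" "\<And>x. \<exists>r\<in>R. x - r \<in> J"
    using RJ unfolding finite_residues_def by blast
  define m where "m = length bs"
  define R' where "R' = (\<lambda>(r, s). r + (\<Sum>i<m. s i * bs ! i)) ` (R \<times> Pi\<^sub>E {..<m} (\<lambda>_. R1))"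
  have "finite R'"
    unfolding R'_def using R(1) R1(1) by (simp add: finite_PiE)
  moreover have "\<exists>r'\<in>R'. x - r' \<in> ideal_prod M J" for x
  proof -
    obtain r where r: "r \<in> R" "x - r \<in> J"
      using R(2) by blast
    then obtain a where a: "x - r = (\<Sum>i<m. a i * bs ! i)"
      using gens(2) unfolding span_list_def m_def by blast
    define s where "s = restrict (\<lambda>i. SOME y. y \<in> R1 \<and> a i - y \<in> M) {..<m}"
    have s: "s i \<in> R1 \<and> a i - s i \<in> M" if "i < m" for i
    proof -
      have "\<exists>y. y \<in> R1 \<and> a i - y \<in> M" using R1(2) by blast
      from someI_ex[OF this] show ?thesis using that by (simp add: s_def)
    qed
    have "x - (r + (\<Sum>i<m. s i * bs ! i)) = (\<Sum>i<m. (a i - s i) * bs ! i)"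
      using a by (simp add: algebra_simps sum_subtractf)
    also have "\<dots> \<in> ideal_prod M J"
      using s gens(1) unfolding m_def
      by (intro ideal_sum[OF ideal_prod_ideal[OF M]] ideal_prod_mem) auto
    finally have "x - (r + (\<Sum>i<m. s i * bs ! i)) \<in> ideal_prod M J" .
    moreover have "s \<in> Pi\<^sub>E {..<m} (\<lambda>_. R1)"
      using s by (auto simp: s_def)
    hence "r + (\<Sum>i<m. s i * bs ! i) \<in> R'"
      unfolding R'_def using r(1) by (intro image_eqI[of _ _ "(r, s)"]) auto
    ultimately show ?thesis by blast
  qed
  ultimately show ?thesis
    unfolding finite_residues_def by blast
qed

lemma finite_residues_ideal_pow:
  assumes noeth: "noetherian_ring TYPE('a::comm_ring_1)" and M: "is_ideal (M :: 'a set)"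
    and fi: "finite_index M"
  shows "finite_residues (ideal_pow M k)"
proof (induction k)
  case 0
  show ?case unfolding finite_residues_def by (rule exI[of _ "{0}"]) simp
next
  case (Suc k)
  obtain bs where "set bs \<subseteq> ideal_pow M k" "ideal_pow M k \<subseteq> span_list bs"
    using noetherian_finitely_generated[OF noeth ideal_pow_ideal[OF M]] by blast
  with Suc show ?case
    using finite_residues_prod[OF M finite_residues_if_finite_index[OF M fi]] by simp
qed

section \<open>A compactness argument\<close>

definition cong_coeffs :: "nat \<Rightarrow> 'a::comm_ring_1 set \<Rightarrow> (nat \<Rightarrow> 'a) \<Rightarrow> (nat \<Rightarrow> 'a) \<Rightarrow> bool" where
  "cong_coeffs N I s t \<longleftrightarrow> (\<forall>j<N. s j - t j \<in> I)"

lemma infinite_residue_class: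
  assumes R: "finite_residues I" and S: "infinite S"
  shows "\<exists>t. infinite {K\<in>S. cong_coeffs N I (v K) t}"
proof -
  obtain R where R: "finite R" "\<And>x. \<exists>r\<in>R. x - r \<in> I"
    using assms(1) unfolding finite_residues_def by blast
  define rep where "rep x = (SOME r. r \<in> R \<and> x - r \<in> I)" for x
  have rep: "rep x \<in> R \<and> x - rep x \<in> I" for x
    unfolding rep_def by (rule someI_ex) (use R(2) in blast)
  define cls where "cls K = restrict (\<lambda>j. rep (v K j)) {..<N}" for K
  have "cls ` S \<subseteq> Pi\<^sub>E {..<N} (\<lambda>_. R)"
    unfolding cls_def using rep by (intro image_subsetI restrict_PiE) auto
  hence "finite (cls ` S)"
    by (rule finite_subset) (simp add: R(1) finite_PiE)
  then obtain K0 where "infinite {K\<in>S. cls K = cls K0}"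
    using pigeonhole_infinite[OF S] by blast
  moreover have "cong_coeffs N I (v K) (cls K)" for K
    using rep by (simp add: cong_coeffs_def cls_def)
  hence "{K\<in>S. cls K = cls K0} \<subseteq> {K\<in>S. cong_coeffs N I (v K) (cls K0)}"
    by (metis (mono_tags, lifting) mem_Collect_eq subsetI)
  ultimately have "infinite {K\<in>S. cong_coeffs N I (v K) (cls K0)}"
    by (rule infinite_super[rotated])
  thus ?thesis by blast
qed

text \<open>Koenig's lemma for a descending chain of ideals with finite residues: from arbitrary
  coefficient sequences \<open>v K\<close> one extracts a coherent sequence \<open>s\<close> (that is, an element of the
  inverse limit) such that each \<open>s k\<close> agrees modulo \<open>I k\<close> with some \<open>v K\<close>, \<open>K \<ge> k\<close>.\<close>
lemma coherent_choice:
  fixes v :: "nat \<Rightarrow> nat \<Rightarrow> 'a::comm_ring_1" and I :: "nat \<Rightarrow> 'a set"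
  assumes ideal: "\<And>k. is_ideal (I k)" and dec: "\<And>k. I (Suc k) \<subseteq> I k"
    and fin: "\<And>k. finite_residues (I k)"
  shows "\<exists>s. \<forall>k. cong_coeffs N (I k) (s (Suc k)) (s k) \<and> (\<exists>K\<ge>k. cong_coeffs N (I k) (v K) (s k))"
proof -
  define good where "good k t \<longleftrightarrow> infinite {K. cong_coeffs N (I k) (v K) t}" for k t
  have start: "\<exists>t. good 0 t"
    using infinite_residue_class[OF fin[of 0] infinite_UNIV_nat] by (simp add: good_def)
  have extend: "\<exists>t'. good (Suc k) t' \<and> cong_coeffs N (I k) t' t" if gk: "good k t" for k t
  proof -
    obtain t' where inf: "infinite {K \<in> {K. cong_coeffs N (I k) (v K) t}. cong_coeffs N (I (Suc k)) (v K) t'}"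
      using infinite_residue_class[OF fin[of "Suc k"] gk[unfolded good_def]] by blast
    from infinite_imp_nonempty[OF inf] obtain K
      where K: "cong_coeffs N (I k) (v K) t" "cong_coeffs N (I (Suc k)) (v K) t'"
      by blast
    have "cong_coeffs N (I k) t' t"
      unfolding cong_coeffs_def
    proof (intro allI impI)
      fix j assume "j < N"
      with K have "v K j - t j \<in> I k" "v K j - t' j \<in> I k"
        using dec by (auto simp: cong_coeffs_def)
      from ideal_diff[OF ideal this] show "t' j - t j \<in> I k" by simp
    qed
    moreover have "good (Suc k) t'"
      using inf unfolding good_def by (rule infinite_super[rotated]) blast
    ultimately show ?thesis by blast
  qed
  obtain s where s: "\<forall>k. good k (s k) \<and> cong_coeffs N (I k) (s (Suc k)) (s k)"
    using dependent_nat_choice[of good "\<lambda>k t t'. cong_coeffs N (I k) t' t"] start extend by blast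
  moreover have "\<exists>K\<ge>k. cong_coeffs N (I k) (v K) (s k)" for k
    using s unfolding good_def infinite_nat_iff_unbounded_le by blast
  ultimately show ?thesis by blast
qed

lemma smat_component [simp]: "smat c A $ i $ j = c * A $ i $ j"
  by (simp add: smat_def)

lemma smat_0 [simp]: "smat 0 (X::'a::comm_ring_1^'n^'n) = 0"
  by (simp add: vec_eq_iff)

lemma smat_1 [simp]: "smat 1 (X::'a::comm_ring_1^'n^'n) = X"
  by (simp add: vec_eq_iff)

lemma smat_add_left: "smat (a + b) (X::'a::comm_ring_1^'n^'n) = smat a X + smat b X"
  by (simp add: vec_eq_iff algebra_simps)

lemma smat_smat: "smat a (smat b (X::'a::comm_ring_1^'n^'n)) = smat (a * b) X"
  by (simp add: vec_eq_iff algebra_simps)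

lemma smat_sum_right: "smat c (sum (f :: _ \<Rightarrow> 'a::comm_ring_1^'n^'n) S) = (\<Sum>i\<in>S. smat c (f i))"
  by (induction S rule: infinite_finite_induct) (simp_all add: vec_eq_iff algebra_simps)

lemma mult_smat: "(A :: 'a::comm_ring_1^'n^'n) ** smat c X = smat c (A ** X)"
  by (simp add: vec_eq_iff matrix_matrix_mult_def sum_distrib_left algebra_simps)

lemma smat_mult: "smat c (X :: 'a::comm_ring_1^'n^'n) ** A = smat c (X ** A)"
  by (simp add: vec_eq_iff matrix_matrix_mult_def sum_distrib_left algebra_simps)

lemma mult_sum_right: "(A :: 'a::comm_ring_1^'n^'n) ** sum f S = (\<Sum>i\<in>S. A ** f i)"
  by (induction S rule: infinite_finite_induct) (simp_all add: matrix_add_ldistrib)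

lemma matrix_add_rdistrib: "((B::'a::comm_ring_1^'n^'n) + C) ** A = B ** A + C ** A"
  by (simp add: vec_eq_iff matrix_matrix_mult_def distrib_right sum.distrib)

text \<open>It is more flexible than \<open>poly_mat\<close>, whose
  range of summation depends on the degree.\<close>
definition eval_coeffs :: "nat \<Rightarrow> (nat \<Rightarrow> 'a::comm_ring_1) \<Rightarrow> 'a^'n^'n \<Rightarrow> 'a^'n^'n" where
  "eval_coeffs m t A = (\<Sum>j<m. smat (t j) (matpow A j))"

lemma poly_mat_eq_eval_coeffs:
  assumes "degree p < m"
  shows "poly_mat p A = eval_coeffs m (coeff p) A"
proof -
  have "poly_mat p A = (\<Sum>j\<in>{..degree p}. smat (coeff p j) (matpow A j))"
    by (simp add: poly_mat_def)
  also have "\<dots> = (\<Sum>j\<in>{..<m}. smat (coeff p j) (matpow A j))"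
    by (rule sum.mono_neutral_left) (use assms in \<open>auto simp: coeff_eq_0 vec_eq_iff\<close>)
  finally show ?thesis by (simp add: eval_coeffs_def)
qed

lemma eval_coeffs_add: "eval_coeffs m (\<lambda>j. s j + t j) A = eval_coeffs m s A + eval_coeffs m t A"
  by (simp add: eval_coeffs_def smat_add_left sum.distrib)

lemma eval_coeffs_smult: "eval_coeffs m (\<lambda>j. c * t j) A = smat c (eval_coeffs m t A)"
  by (simp add: eval_coeffs_def smat_sum_right smat_smat)

lemma poly_mat_0 [simp]: "poly_mat 0 A = 0"
  by (simp add: poly_mat_def vec_eq_iff)

lemma poly_mat_add: "poly_mat (p + q) A = poly_mat p A + poly_mat q A"
proof -
  define m where "m = Suc (max (degree p) (degree q))"
  have "degree (p + q) < m" "degree p < m" "degree q < m"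
    using degree_add_le_max[of p q] unfolding m_def by linarith+
  then show ?thesis
    using eval_coeffs_add[of m "coeff p" "coeff q" A]
    by (simp add: poly_mat_eq_eval_coeffs coeff_add[abs_def])
qed

lemma poly_mat_smult: "poly_mat (smult c p) A = smat c (poly_mat p A)"
proof -
  define m where "m = Suc (degree p)"
  have "degree (smult c p) < m" "degree p < m"
    using degree_smult_le[of c p] unfolding m_def by linarith+
  then show ?thesis
    using eval_coeffs_smult[of m c "coeff p" A]
    by (simp add: poly_mat_eq_eval_coeffs coeff_smult[abs_def])
qed

lemma poly_mat_pCons: "poly_mat (pCons a p) A = smat a (mat 1) + A ** poly_mat p A"
proof -
  define m where "m = Suc (degree p)"
  have "degree (pCons a p) < Suc m"
    unfolding m_def by (simp add: degree_pCons_le Suc_le_lessD)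
  hence "poly_mat (pCons a p) A = eval_coeffs (Suc m) (coeff (pCons a p)) A"
    by (rule poly_mat_eq_eval_coeffs)
  also have "\<dots> = smat a (mat 1) + (\<Sum>j<m. smat (coeff p j) (matpow A (Suc j)))"
    unfolding eval_coeffs_def by (subst sum.lessThan_Suc_shift) simp
  also have "(\<Sum>j<m. smat (coeff p j) (matpow A (Suc j))) = A ** eval_coeffs m (coeff p) A"
    by (simp add: eval_coeffs_def mult_sum_right mult_smat)
  also have "eval_coeffs m (coeff p) A = poly_mat p A"
    using poly_mat_eq_eval_coeffs[of p m A] by (simp add: m_def)
  finally show ?thesis .
qed

lemma poly_mat_mult: "poly_mat (p * q) A = poly_mat p A ** poly_mat q A"
proof (induction p)
  case 0
  then show ?case by (simp add: vec_eq_iff matrix_matrix_mult_def)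
next
  case (pCons a p)
  have "poly_mat (pCons a p * q) A = smat a (poly_mat q A) + A ** (poly_mat p A ** poly_mat q A)"
    by (simp add: poly_mat_add poly_mat_smult poly_mat_pCons pCons.IH)
  also have "\<dots> = poly_mat (pCons a p) A ** poly_mat q A"
    by (simp add: poly_mat_pCons matrix_add_rdistrib smat_mult matrix_mul_assoc)
  finally show ?case .
qed

definition cong_mat :: "'a::comm_ring_1 set \<Rightarrow> 'a^'n^'n \<Rightarrow> 'a^'n^'n \<Rightarrow> bool" where
  "cong_mat I A B \<longleftrightarrow> (\<forall>i j. A $ i $ j - B $ i $ j \<in> I)"

context
  fixes I :: "'a::comm_ring_1 set"
  assumes I: "is_ideal I"
begin

lemma cong_mat_refl: "cong_mat I A A"
  by (simp add: cong_mat_def ideal_0[OF I])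

lemma cong_mat_sym: "cong_mat I A B \<Longrightarrow> cong_mat I B A"
  unfolding cong_mat_def using ideal_uminus[OF I] by (metis minus_diff_eq)

lemma cong_mat_trans: "cong_mat I A B \<Longrightarrow> cong_mat I B C \<Longrightarrow> cong_mat I A C"
  unfolding cong_mat_def
proof (intro allI)
  fix i j
  assume "\<forall>i j. A $ i $ j - B $ i $ j \<in> I" "\<forall>i j. B $ i $ j - C $ i $ j \<in> I"
  hence "(A $ i $ j - B $ i $ j) + (B $ i $ j - C $ i $ j) \<in> I"
    using ideal_add[OF I] by blast
  thus "A $ i $ j - C $ i $ j \<in> I" by simp
qed

lemma cong_mat_add: "cong_mat I A B \<Longrightarrow> cong_mat I A' B' \<Longrightarrow> cong_mat I (A + A') (B + B')"
  unfolding cong_mat_def using ideal_add[OF I] by (simp add: add_diff_add)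

lemma cong_mat_sum: "(\<And>x. x \<in> S \<Longrightarrow> cong_mat I (f x) (g x)) \<Longrightarrow> cong_mat I (sum f S) (sum g S)"
  by (induction S rule: infinite_finite_induct) (simp_all add: cong_mat_refl cong_mat_add)

lemma cong_mat_smat: "cong_mat I A B \<Longrightarrow> cong_mat I (smat c A) (smat c B)"
  unfolding cong_mat_def using ideal_lmult[OF I] by (simp add: right_diff_distrib[symmetric])

lemma cong_mat_smat_coeff: "c - c' \<in> I \<Longrightarrow> cong_mat I (smat c A) (smat c' A)"
  unfolding cong_mat_def using ideal_rmult[OF I] by (simp add: left_diff_distrib[symmetric])

lemma cong_mat_mult:
  assumes "cong_mat I A B" "cong_mat I A' B'"
  shows "cong_mat I ((A :: 'a^'n^'n) ** A') (B ** B')"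
  unfolding cong_mat_def
proof (intro allI)
  fix i j
  have "(A ** A') $ i $ j - (B ** B') $ i $ j =
     (\<Sum>k\<in>UNIV. (A $ i $ k - B $ i $ k) * A' $ k $ j + B $ i $ k * (A' $ k $ j - B' $ k $ j))"
    by (simp add: matrix_matrix_mult_def sum_subtractf[symmetric] algebra_simps)
  also have "\<dots> \<in> I"
    using assms unfolding cong_mat_def
    by (intro ideal_sum[OF I] ideal_add[OF I] ideal_rmult[OF I] ideal_lmult[OF I]) auto
  finally show "(A ** A') $ i $ j - (B ** B') $ i $ j \<in> I" .
qed

lemma cong_mat_matpow: "cong_mat I A B \<Longrightarrow> cong_mat I (matpow A j) (matpow B j)"
  by (induction j) (simp_all add: cong_mat_refl cong_mat_mult)

lemma cong_mat_eval_coeffs: "cong_mat I A B \<Longrightarrow> cong_mat I (eval_coeffs m t A) (eval_coeffs m t B)"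
  unfolding eval_coeffs_def by (intro cong_mat_sum cong_mat_smat cong_mat_matpow)

lemma cong_mat_eval_coeffs_coeffs:
  "cong_coeffs m I s t \<Longrightarrow> cong_mat I (eval_coeffs m s A) (eval_coeffs m t A)"
  unfolding eval_coeffs_def cong_coeffs_def by (intro cong_mat_sum cong_mat_smat_coeff) auto

lemma cong_mat_poly_mat: "cong_mat I A B \<Longrightarrow> cong_mat I (poly_mat p A) (poly_mat p B)"
  unfolding poly_mat_def by (intro cong_mat_sum cong_mat_smat cong_mat_matpow)

end

section \<open>The Cayley--Hamilton theorem\<close>

definition adjugate :: "'a::comm_ring_1^'n^'n \<Rightarrow> 'a^'n^'n" where
  "adjugate B = (\<chi> j k. det (\<chi> r. if r = k then axis j (1::'a) else B $ r))"

lemma mult_adjugate: "(B::'a::comm_ring_1^'n^'n) ** adjugate B = (\<chi> i k. if i = k then det B else 0)"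
proof -
  have "(B ** adjugate B) $ i $ k = (if i = k then det B else 0)" for i k
  proof -
    have "(B ** adjugate B) $ i $ k
        = (\<Sum>j\<in>UNIV. det (\<chi> r. if r = k then B $ i $ j *s axis j 1 else B $ r))"
      by (simp add: matrix_matrix_mult_def adjugate_def det_row_mul)
    also have "\<dots> = det (\<chi> r. if r = k then (\<Sum>j\<in>UNIV. B $ i $ j *s axis j 1) else B $ r)"
      by (rule det_linear_row_sum[symmetric]) simp
    also have "(\<Sum>j\<in>UNIV. B $ i $ j *s axis j (1::'a)) = B $ i"
      by (simp add: vec_eq_iff axis_def sum_component if_distrib cong: if_cong)
    also have "det (\<chi> r. if r = k then B $ i else B $ r) = (if i = k then det B else 0)"
    proof (cases "i = k")
      case True
      then have "(\<chi> r. if r = k then B $ i else B $ r) = B" by (simp add: vec_eq_iff)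
      with True show ?thesis by simp
    next
      case False
      then show ?thesis
        by (simp add: det_identical_rows[OF False] row_def vec_eq_iff)
    qed
    finally show ?thesis .
  qed
  thus ?thesis by (simp add: vec_eq_iff)
qed

definition charmat :: "'a::comm_ring_1^'n^'n \<Rightarrow> 'a poly^'n^'n" where
  "charmat A = (\<chi> i j. (if i = j then [:0, 1:] else 0) - [:A $ i $ j:])"

definition charpoly :: "'a::comm_ring_1^'n^'n \<Rightarrow> 'a poly" where
  "charpoly A = det (charmat A)"

definition coeff_mat :: "'a::comm_ring_1 poly^'n^'n \<Rightarrow> nat \<Rightarrow> 'a^'n^'n" where
  "coeff_mat P j = (\<chi> i k. coeff (P $ i $ k) j)"

lemma coeff_mat_charmat_mult:
  "coeff_mat (charmat A ** P) j = (if j = 0 then 0 else coeff_mat P (j - 1)) - A ** coeff_mat P j"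
proof -
  have "coeff ((charmat A ** P) $ i $ k) j =
      (if j = 0 then 0 else coeff (P $ i $ k) (j - 1)) - (\<Sum>l\<in>UNIV. A $ i $ l * coeff (P $ l $ k) j)"
    for i k
  proof -
    have "(charmat A ** P) $ i $ k
        = (\<Sum>l\<in>UNIV. (if i = l then pCons 0 (P $ l $ k) else 0) - smult (A $ i $ l) (P $ l $ k))"
      unfolding matrix_matrix_mult_def charmat_def
      by (simp, intro sum.cong) (simp_all add: left_diff_distrib)
    also have "\<dots> = pCons 0 (P $ i $ k) - (\<Sum>l\<in>UNIV. smult (A $ i $ l) (P $ l $ k))"
      by (simp add: sum_subtractf)
    finally show ?thesis by (cases j) (simp_all add: coeff_sum)
  qed
  thus ?thesis by (simp add: vec_eq_iff coeff_mat_def matrix_matrix_mult_def)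
qed

lemma coeff_mat_diagonal: "coeff_mat (\<chi> i k. if i = k then p else 0) j = smat (coeff p j) (mat 1)"
  by (simp add: vec_eq_iff coeff_mat_def mat_def)

lemma coeff_mat_eventually_zero: "\<exists>d. \<forall>j>d. coeff_mat (P :: 'a::comm_ring_1 poly^'n^'n) j = 0"
proof
  define d where "d = (\<Sum>i\<in>UNIV. \<Sum>k\<in>UNIV. degree (P $ i $ k))"
  have deg: "degree (P $ i $ k) \<le> d" for i k
  proof -
    have "degree (P $ i $ k) \<le> (\<Sum>k\<in>UNIV. degree (P $ i $ k))" by (rule member_le_sum) auto
    also have "\<dots> \<le> d"
      unfolding d_def by (rule member_le_sum[of _ UNIV "\<lambda>i. \<Sum>k\<in>UNIV. degree (P $ i $ k)"]) auto
    finally show ?thesis .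
  qed
  show "\<forall>j>d. coeff_mat P j = 0"
  proof (intro allI impI)
    fix j assume "j > d"
    then have "coeff (P $ i $ k) j = 0" for i k
      using deg[of i k] by (intro coeff_eq_0) linarith
    then show "coeff_mat P j = 0"
      by (simp add: coeff_mat_def vec_eq_iff)
  qed
qed

lemma matpow_commute: "matpow A j ** A = A ** matpow A j"
  by (induction j) (simp_all add: matrix_mul_assoc[symmetric])

lemma matrix_diff_ldistrib: "(A::'a::comm_ring_1^'n^'n) ** (B - C) = A ** B - A ** C"
  by (simp add: vec_eq_iff matrix_matrix_mult_def right_diff_distrib sum_subtractf)

text \<open>Cayley--Hamilton: with \<open>Q\<^sub>j\<close> the coefficients of \<open>adj(x I - A)\<close>, the coefficients of
  \<open>(x I - A) adj(x I - A) = \<chi>\<^sub>A(x) I\<close> give \<open>\<chi>\<^sub>A(A) = \<Sum>\<^sub>j A\<^sup>j (Q\<^sub>j\<^sub>-\<^sub>1 - A Q\<^sub>j)\<close>, a telescoping sum.\<close>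
theorem cayley_hamilton: "poly_mat (charpoly A) A = 0"
proof -
  define Q where "Q = coeff_mat (adjugate (charmat A))"
  obtain d where Q0: "\<And>j. j > d \<Longrightarrow> Q j = 0"
    using coeff_mat_eventually_zero unfolding Q_def by blast
  define m where "m = degree (charpoly A) + d + 2"
  have coeffs: "coeff_mat (charmat A ** adjugate (charmat A)) j = smat (coeff (charpoly A) j) (mat 1)"
    for j by (simp add: mult_adjugate charpoly_def coeff_mat_diagonal)
  define V where "V j = matpow A j ** (if j = 0 then 0 else Q (j - 1))" for j
  have "poly_mat (charpoly A) A = eval_coeffs m (coeff (charpoly A)) A"
    by (rule poly_mat_eq_eval_coeffs) (simp add: m_def)
  also have "\<dots> = (\<Sum>j<m. matpow A j ** coeff_mat (charmat A ** adjugate (charmat A)) j)"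
    unfolding eval_coeffs_def coeffs mult_smat matrix_mul_rid ..
  also have "\<dots> = (\<Sum>j<m. V j - V (Suc j))"
  proof (rule sum.cong[OF refl])
    fix j
    have "matpow A j ** (A ** Q j) = matpow A (Suc j) ** Q j"
      by (simp add: matrix_mul_assoc matpow_commute)
    thus "matpow A j ** coeff_mat (charmat A ** adjugate (charmat A)) j = V j - V (Suc j)"
      unfolding coeff_mat_charmat_mult V_def Q_def by (simp add: matrix_diff_ldistrib)
  qed
  also have "\<dots> = V 0 - V m"
    by (rule sum_lessThan_telescope')
  also have "\<dots> = 0"
    using Q0[of "m - 1"] by (simp add: V_def m_def)
  finally show ?thesis .
qed

lemma charmat_diagonal: "charmat A $ i $ i = [:- A $ i $ i, 1:]"
  by (simp add: charmat_def)

lemma degree_charmat_le: "degree (charmat A $ i $ j) \<le> (if i = j then 1 else 0)"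
  by (auto simp: charmat_def charmat_diagonal)

text \<open>In the Leibniz expansion of \<open>det (x I - A)\<close>, a non-identity permutation moves some
  index and so picks at least one constant entry: its term has degree \<open>< n\<close>.\<close>
lemma degree_charmat_perm_term:
  fixes A :: "'a::comm_ring_1^'n^'n"
  assumes "p \<noteq> id"
  shows "degree (\<Prod>i\<in>UNIV. charmat A $ i $ p i) < CARD('n)"
proof -
  obtain i0 where i0: "p i0 \<noteq> i0" using assms by (auto simp: fun_eq_iff)
  have "degree (\<Prod>i\<in>UNIV. charmat A $ i $ p i) \<le> (\<Sum>i\<in>UNIV. degree (charmat A $ i $ p i))"
    using degree_prod_sum_le[of UNIV "\<lambda>i. charmat A $ i $ p i"] by (simp add: o_def)
  also have "\<dots> \<le> (\<Sum>i\<in>UNIV. if i = i0 then 0 else 1)"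
  proof (rule sum_mono)
    fix i
    show "degree (charmat A $ i $ p i) \<le> (if i = i0 then 0 else 1)"
      using degree_charmat_le[of A i "p i"] i0 by (cases "i = p i"; cases "i = i0") auto
  qed
  also have "\<dots> = CARD('n) - 1"
  proof -
    have "(\<Sum>i\<in>UNIV. if i = i0 then 0 else 1::nat) = (\<Sum>i\<in>UNIV - {i0}. 1)"
      by (rule sum.mono_neutral_cong_right) auto
    thus ?thesis by (simp add: card_Diff_singleton)
  qed
  finally show ?thesis
    using zero_less_card_finite[where 'a='n] by linarith
qed

lemma charpoly_monic:
  fixes A :: "'a::idom^'n^'n"
  shows "degree (charpoly A) = CARD('n)" and "lead_coeff (charpoly A) = 1"
proof -
  define perms where "perms = {p. p permutes (UNIV::'n set)}"
  define T where "T = (\<Prod>i\<in>UNIV. charmat A $ i $ i)"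
  define R where "R = (\<Sum>p\<in>perms - {id}. of_int (sign p) * (\<Prod>i\<in>UNIV. charmat A $ i $ p i))"
  have fin: "finite perms"
    by (simp add: perms_def finite_permutations)
  have cp: "charpoly A = T + R"
    unfolding charpoly_def det_def T_def R_def perms_def[symmetric]
    by (subst sum.remove[OF fin, of id]) (simp_all add: perms_def permutes_id)
  have lT: "lead_coeff T = 1"
    unfolding T_def lead_coeff_prod charmat_diagonal by simp
  have dT: "degree T = CARD('n)"
    unfolding T_def by (subst degree_prod_eq_sum_degree) (simp_all add: charmat_diagonal)
  have dR: "degree R < CARD('n)"
  proof -
    have "degree R \<le> CARD('n) - 1"
      unfolding R_def
    proof (rule degree_sum_le)
      show "finite (perms - {id})" using fin by simp
    next
      fix p assume "p \<in> perms - {id}"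
      hence "degree (\<Prod>i\<in>UNIV. charmat A $ i $ p i) < CARD('n)"
        by (intro degree_charmat_perm_term) simp
      moreover have "degree (of_int (sign p) * (\<Prod>i\<in>UNIV. charmat A $ i $ p i))
          \<le> degree (\<Prod>i\<in>UNIV. charmat A $ i $ p i)"
        using degree_mult_le[of "of_int (sign p)" "\<Prod>i\<in>UNIV. charmat A $ i $ p i"] by simp
      ultimately show "degree (of_int (sign p) * (\<Prod>i\<in>UNIV. charmat A $ i $ p i)) \<le> CARD('n) - 1"
        by linarith
    qed
    thus ?thesis using zero_less_card_finite[where 'a='n] by linarith
  qed
  show deg: "degree (charpoly A) = CARD('n)"
    using cp dT dR degree_add_eq_left[of R T] by simp
  show "lead_coeff (charpoly A) = 1"
    using lT dT dR deg unfolding cp by (simp add: coeff_eq_0)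
qed

section \<open>Companion matrices\<close>

text \<open>Index the rows and columns by \<open>0, \<dots>, n - 1\<close> through a bijection \<open>e\<close>.  The companion
  matrix of the coefficient sequence \<open>c\<close> maps the \<open>k\<close>-th basis vector to the \<open>(k+1)\<close>-st
  and the last one to \<open>-(c\<^sub>0, \<dots>, c\<^sub>n\<^sub>-\<^sub>1)\<close>.\<close>
definition companion :: "('n::finite \<Rightarrow> nat) \<Rightarrow> (nat \<Rightarrow> 'a::comm_ring_1) \<Rightarrow> 'a^'n^'n" where
  "companion e c = (\<chi> i j. if Suc (e j) < CARD('n) then (if e i = Suc (e j) then 1 else 0) else - c (e i))"

lemma mult_axis: "(M :: 'a::comm_ring_1^'n^'n) *v axis j 1 = (\<chi> i. M $ i $ j)"
  by (simp add: vec_eq_iff matrix_vector_mult_def axis_def if_distrib cong: if_cong)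

lemma sum_mult_vec: "sum (f :: _ \<Rightarrow> 'a::comm_ring_1^'n^'n) S *v u = (\<Sum>k\<in>S. f k *v u)"
  by (induction S rule: infinite_finite_induct) (simp_all add: matrix_vector_mult_add_rdistrib)

lemma smat_mult_vec: "smat c (X :: 'a::comm_ring_1^'n^'n) *v u = c *s (X *v u)"
  by (simp add: vec_eq_iff matrix_vector_mult_def sum_distrib_left algebra_simps)

definition basis_vec :: "('n \<Rightarrow> nat) \<Rightarrow> nat \<Rightarrow> 'a::comm_ring_1^'n" where
  "basis_vec e k = axis (inv e k) 1"

context
  fixes e :: "'n::finite \<Rightarrow> nat"
  assumes bij: "bij_betw e UNIV {..<CARD('n)}"
begin

lemma e_inv: "k < CARD('n) \<Longrightarrow> e (inv e k) = k"
  using bij by (simp add: bij_betw_def f_inv_into_f)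

lemma inv_e: "inv e (e i) = i"
  using bij by (simp add: bij_betw_def)

lemma e_less: "e i < CARD('n)"
  using bij by (auto simp: bij_betw_def)

lemma companion_mult_basis_vec:
  assumes "k < CARD('n)"
  shows "companion e c *v basis_vec e k =
    (if Suc k < CARD('n) then basis_vec e (Suc k) else (\<chi> i. - c (e i)))"
proof -
  have next_iff: "e i = Suc k \<longleftrightarrow> i = inv e (Suc k)" if "Suc k < CARD('n)" for i
    using e_inv[OF that] inv_e by metis
  have "companion e c *v basis_vec e k = (\<chi> i. companion e c $ i $ inv e k)"
    by (simp only: basis_vec_def mult_axis)
  then show ?thesis
    using e_inv[OF assms] next_iff
    by (simp add: basis_vec_def vec_eq_iff companion_def axis_def)
qed

lemma matpow_companion_basis_vec:
  "k < CARD('n) \<Longrightarrow> matpow (companion e c) k *v basis_vec e 0 = basis_vec e k"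
proof (induction k)
  case (Suc k)
  have "matpow (companion e c) (Suc k) *v basis_vec e 0
      = companion e c *v (matpow (companion e c) k *v basis_vec e 0)"
    by (simp add: matrix_vector_mul_assoc)
  with Suc show ?case by (simp add: companion_mult_basis_vec)
qed simp

lemma matpow_companion_basis_vec_card:
  "matpow (companion e c) CARD('n) *v basis_vec e 0 = (\<chi> i. - c (e i))"
proof -
  obtain k where k: "CARD('n) = Suc k"
    using zero_less_card_finite not0_implies_Suc by blast
  have "matpow (companion e c) (Suc k) *v basis_vec e 0
      = companion e c *v (matpow (companion e c) k *v basis_vec e 0)"
    by (simp add: matrix_vector_mul_assoc)
  with k show ?thesis
    by (simp add: matpow_companion_basis_vec companion_mult_basis_vec)
qed

lemma eval_coeffs_companion_basis_vec:
  "eval_coeffs CARD('n) t (companion e c) *v basis_vec e 0 = (\<chi> i. t (e i))"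
proof -
  have "eval_coeffs CARD('n) t (companion e c) *v basis_vec e 0 = (\<Sum>k<CARD('n). t k *s basis_vec e k)"
    unfolding eval_coeffs_def sum_mult_vec smat_mult_vec
    by (intro sum.cong refl) (simp add: matpow_companion_basis_vec)
  also have "\<dots> = (\<chi> i. t (e i))"
  proof -
    have "(\<Sum>k<CARD('n). t k * (if i = inv e k then 1 else 0)) = t (e i)" for i
    proof -
      have "(\<Sum>k<CARD('n). t k * (if i = inv e k then 1 else 0))
          = (\<Sum>k<CARD('n). if k = e i then t k else 0)"
        using e_inv inv_e by (intro sum.cong refl) fastforce
      also have "\<dots> = t (e i)" using e_less[of i] by simp
      finally show ?thesis .
    qed
    thus ?thesis by (simp add: vec_eq_iff axis_def basis_vec_def)
  qed
  finally show ?thesis .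
qed

lemma poly_mat_companion_basis_vec:
  "degree p < CARD('n) \<Longrightarrow> poly_mat p (companion e c) *v basis_vec e 0 = (\<chi> i. coeff p (e i))"
  by (simp add: poly_mat_eq_eval_coeffs eval_coeffs_companion_basis_vec)

lemma poly_mat_companion_root:
  assumes "degree p = CARD('n)" "lead_coeff p = 1"
  shows "poly_mat p (companion e (coeff p)) *v basis_vec e 0 = 0"
proof -
  let ?C = "companion e (coeff p)"
  have "poly_mat p ?C = eval_coeffs (Suc CARD('n)) (coeff p) ?C"
    by (rule poly_mat_eq_eval_coeffs) (simp add: assms)
  also have "\<dots> = eval_coeffs CARD('n) (coeff p) ?C + matpow ?C CARD('n)"
    using assms by (simp add: eval_coeffs_def)
  finally have "poly_mat p ?C *v basis_vec e 0 =
      eval_coeffs CARD('n) (coeff p) ?C *v basis_vec e 0 + matpow ?C CARD('n) *v basis_vec e 0"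
    by (simp add: matrix_vector_mult_add_rdistrib)
  also have "\<dots> = 0"
    by (simp add: eval_coeffs_companion_basis_vec matpow_companion_basis_vec_card vec_eq_iff)
  finally show ?thesis .
qed

end

lemma poly_mat_charpoly_remainder:
  fixes g :: "'a::idom poly" and A :: "'a^'n^'n"
  obtains q r where "g = charpoly A * q + r" "degree r < CARD('n)" "poly_mat g A = poly_mat r A"
proof -
  have monic: "lead_coeff (charpoly A) = 1" and deg: "degree (charpoly A) = CARD('n)"
    using charpoly_monic[of A] by auto
  have nz: "charpoly A \<noteq> 0" using monic by auto
  obtain q r where qr: "pseudo_divmod g (charpoly A) = (q, r)"
    by (cases "pseudo_divmod g (charpoly A)") auto
  have g: "g = charpoly A * q + r"
    using pseudo_divmod(1)[OF nz qr] monic by simp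
  moreover have "degree r < CARD('n)"
    using pseudo_divmod(2)[OF nz qr] deg by auto
  moreover have "poly_mat g A = poly_mat r A"
    using cayley_hamilton[of A] by (subst g) (simp add: poly_mat_add poly_mat_mult)
  ultimately show ?thesis by (rule that)
qed

text \<open>If \<open>d\<close> divides every entry of every value of \<open>g = \<chi> q + r\<close> with \<open>\<chi>\<close> monic of degree
  \<open>n\<close> and \<open>deg r < n\<close>, then \<open>d\<close> divides the coefficients of \<open>r\<close>: evaluate at the companion
  matrix of \<open>\<chi>\<close> and apply to the first basis vector.\<close>
lemma dvd_remainder_coeffs:
  fixes g :: "'a::comm_ring_1 poly"
  assumes dvd: "\<And>B :: 'a^'n^'n. \<And>i j. d dvd (poly_mat g B $ i $ j)"
    and g: "g = p * q + r" and p: "degree p = CARD('n::finite)" "lead_coeff p = 1"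
    and r: "degree r < CARD('n)" and k: "k < CARD('n)"
  shows "d dvd coeff r k"
proof -
  obtain e :: "'n \<Rightarrow> nat" where bij: "bij_betw e UNIV {..<CARD('n)}"
    using ex_bij_betw_finite_nat[of "UNIV :: 'n set"] by (auto simp: atLeast0LessThan)
  define C :: "'a^'n^'n" where "C = companion e (coeff p)"
  have "poly_mat g C *v basis_vec e 0
      = poly_mat q C *v (poly_mat p C *v basis_vec e 0) + poly_mat r C *v basis_vec e 0"
    by (simp add: g poly_mat_add poly_mat_mult mult.commute[of p q] matrix_vector_mult_add_rdistrib
        matrix_vector_mul_assoc)
  also have "\<dots> = (\<chi> i. coeff r (e i))"
    using poly_mat_companion_root[OF bij p] poly_mat_companion_basis_vec[OF bij r]
    by (simp add: C_def)
  finally have "coeff r k = (poly_mat g C *v basis_vec e 0) $ inv e k"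
    using e_inv[OF bij k] by simp
  also have "\<dots> = poly_mat g C $ inv e k $ inv e 0"
    unfolding basis_vec_def mult_axis by simp
  finally show ?thesis using dvd by simp
qed

lemma dvd_values_imp_scaled_value:
  fixes g :: "'a::idom poly" and A :: "'a^'n^'n"
  assumes dvd: "\<And>B :: 'a^'n^'n. \<And>i j. d dvd (poly_mat g B $ i $ j)"
  shows "\<exists>t. poly_mat g A = smat d (eval_coeffs CARD('n) t A)"
proof -
  obtain q r where qr: "g = charpoly A * q + r" and r: "degree r < CARD('n)"
    and gA: "poly_mat g A = poly_mat r A"
    by (rule poly_mat_charpoly_remainder)
  have "\<forall>k. \<exists>t. k < CARD('n) \<longrightarrow> coeff r k = d * t"
    using dvd_remainder_coeffs[OF dvd qr charpoly_monic r] by (auto elim!: dvdE)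
  then obtain t where t: "\<And>k. k < CARD('n) \<Longrightarrow> coeff r k = d * t k"
    by metis
  have "poly_mat g A = eval_coeffs CARD('n) (\<lambda>k. d * t k) A"
    unfolding gA poly_mat_eq_eval_coeffs[OF r] eval_coeffs_def by (simp add: t)
  also have "\<dots> = smat d (eval_coeffs CARD('n) t A)"
    by (rule eval_coeffs_smult)
  finally show ?thesis by blast
qed

lemma to_fract_sum: "to_fract (sum f S) = (\<Sum>x\<in>S. to_fract (f x))"
  by (induction S rule: infinite_finite_induct) simp_all

definition to_fract_mat :: "'a::idom^'n^'n \<Rightarrow> 'a fract^'n^'n" where
  "to_fract_mat B = (\<chi> i j. to_fract (B $ i $ j))"

lemma to_fract_mat_mult: "to_fract_mat (A ** B) = to_fract_mat A ** to_fract_mat B"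
  by (simp add: vec_eq_iff to_fract_mat_def matrix_matrix_mult_def to_fract_sum)

lemma to_fract_mat_one: "to_fract_mat (mat 1 :: 'a::idom^'n^'n) = mat 1"
  by (simp add: vec_eq_iff to_fract_mat_def mat_def)

lemma to_fract_mat_matpow: "matpow (to_fract_mat B) j = to_fract_mat (matpow B j)"
  by (induction j) (simp_all add: to_fract_mat_one to_fract_mat_mult)

lemma to_fract_mat_poly_mat:
  "poly_mat (map_poly to_fract g) (to_fract_mat B) = to_fract_mat (poly_mat g B)"
proof -
  define m where "m = Suc (degree g)"
  have m: "degree (map_poly to_fract g) < m" "degree g < m"
    by (simp_all add: m_def degree_map_poly)
  show ?thesis
    unfolding poly_mat_eq_eval_coeffs[OF m(1)] poly_mat_eq_eval_coeffs[OF m(2)] eval_coeffs_def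
    by (simp add: vec_eq_iff to_fract_mat_def coeff_map_poly to_fract_sum
        to_fract_mat_matpow[unfolded to_fract_mat_def])
qed

lemma Int_K_Mn_dvd:
  fixes g :: "'a::idom poly"
  assumes f: "f \<in> (Int_K_Mn TYPE('n) :: 'a fract poly set)" and d: "d \<noteq> 0"
    and f_eq: "f = smult (inverse (to_fract d)) (map_poly to_fract g)"
  shows "d dvd (poly_mat g (B :: 'a^'n^'n) $ i $ j)"
proof -
  have "poly_mat f (to_fract_mat B) $ i $ j \<in> range to_fract"
    using f unfolding Int_K_Mn_def to_fract_mat_def by blast
  also have "poly_mat f (to_fract_mat B) $ i $ j = inverse (to_fract d) * to_fract (poly_mat g B $ i $ j)"
    by (simp add: f_eq poly_mat_smult to_fract_mat_poly_mat) (simp add: to_fract_mat_def)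
  finally obtain z where "inverse (to_fract d) * to_fract (poly_mat g B $ i $ j) = to_fract z"
    by blast
  with d have "to_fract (poly_mat g B $ i $ j) = to_fract d * to_fract z"
    by (simp add: field_simps)
  hence "poly_mat g B $ i $ j = d * z"
    by (simp only: to_fract_mult[symmetric] to_fract_eq_iff)
  thus ?thesis by simp
qed

lemma hat_mat_cong:
  assumes M: "is_ideal M" and C: "hat_mat M C" and "k \<le> K"
  shows "cong_mat (ideal_pow M k) (C K) (C k)"
  using \<open>k \<le> K\<close>
proof (induction K rule: dec_induct)
  case base
  show ?case by (rule cong_mat_refl[OF ideal_pow_ideal[OF M]])
next
  case (step K)
  have "cong_mat (ideal_pow M K) (C (Suc K)) (C K)"
    using C unfolding hat_mat_def hat_elem_def cong_mat_def by blast
  hence "cong_mat (ideal_pow M k) (C (Suc K)) (C K)"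
    using ideal_pow_antimono[OF M step(1)] unfolding cong_mat_def by blast
  thus ?case
    using step(3) by (rule cong_mat_trans[OF ideal_pow_ideal[OF M]])
qed

text \<open>At each level \<open>K\<close>, \<open>g(C\<^sub>K) = d s\<^sub>K(C\<^sub>K)\<close> with \<open>s\<^sub>K \<in> D[x]\<close> of degree \<open>< n\<close>; the
  coefficient vectors \<open>s\<^sub>K\<close> need not be coherent, but by compactness (Koenig's lemma, using
  that all \<open>D/M\<^sup>k\<close> are finite) a coherent sequence of coefficients close to them exists; it
  defines \<open>s \<in> \<hat>D[x]\<close> with \<open>g(C) = d s(C)\<close>.\<close>
lemma frac_val_in_hat_alg_if_dvd:
  fixes M :: "'a::idom set" and C :: "nat \<Rightarrow> 'a^'n^'n" and g :: "'a poly"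
  assumes noeth: "noetherian_ring TYPE('a)" and M: "is_ideal M" and fi: "finite_index M"
    and C: "hat_mat M C"
    and dvd: "\<And>B :: 'a^'n^'n. \<And>i j. d dvd (poly_mat g B $ i $ j)"
  shows "frac_val_in_hat_alg M g d C"
proof -
  let ?N = "CARD('n)" and ?I = "ideal_pow M"
  have I: "is_ideal (?I k)" for k
    by (rule ideal_pow_ideal[OF M])
  have "\<forall>K. \<exists>t. poly_mat g (C K) = smat d (eval_coeffs ?N t (C K))"
    using dvd_values_imp_scaled_value[OF dvd] by blast
  then obtain v where v: "\<And>K. poly_mat g (C K) = smat d (eval_coeffs ?N (v K) (C K))"
    by metis
  obtain s where coherent: "\<And>k. cong_coeffs ?N (?I k) (s (Suc k)) (s k)"
    and close: "\<And>k. \<exists>K\<ge>k. cong_coeffs ?N (?I k) (v K) (s k)"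
    using coherent_choice[where I = "ideal_pow M" and N = "CARD('n)" and v = v,
        OF I ideal_pow_Suc_subset[OF M] finite_residues_ideal_pow[OF noeth M fi]] by blast
  have approx: "cong_mat (?I k) (poly_mat g (C k)) (smat d (eval_coeffs ?N (s k) (C k)))" for k
  proof -
    obtain K where K: "k \<le> K" "cong_coeffs ?N (?I k) (v K) (s k)"
      using close by blast
    have "cong_mat (?I k) (poly_mat g (C k)) (poly_mat g (C K))"
      using hat_mat_cong[OF M C K(1)] by (rule cong_mat_sym[OF I, OF cong_mat_poly_mat[OF I]])
    also have "poly_mat g (C K) = smat d (eval_coeffs ?N (v K) (C K))"
      by (rule v)
    also have "cong_mat (?I k) \<dots> (smat d (eval_coeffs ?N (v K) (C k)))"
      using hat_mat_cong[OF M C K(1)] by (intro cong_mat_smat[OF I] cong_mat_eval_coeffs[OF I])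
    also (cong_mat_trans[OF I]) have "cong_mat (?I k) \<dots> (smat d (eval_coeffs ?N (s k) (C k)))"
      using K(2) by (intro cong_mat_smat[OF I] cong_mat_eval_coeffs_coeffs[OF I])
    finally (cong_mat_trans[OF I]) show ?thesis .
  qed
  define cs where "cs = map (\<lambda>j k. s k j) [0..<?N]"
  have "\<forall>c\<in>set cs. hat_elem M c"
    using coherent by (auto simp: cs_def hat_elem_def cong_coeffs_def)
  moreover have "hat_poly_mat cs C k = eval_coeffs ?N (s k) (C k)" for k
    by (simp add: hat_poly_mat_def cs_def eval_coeffs_def)
  hence "hat_mat_eq M (D_poly_hat_mat g C) (scal_hat_mat d (hat_poly_mat cs C))"
    using approx by (simp add: hat_mat_eq_def D_poly_hat_mat_def scal_hat_mat_def cong_mat_def)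
  ultimately show ?thesis
    unfolding frac_val_in_hat_alg_def by blast
qed

theorem mainTheorem6:
  fixes M :: "'a::idom set" and C :: "nat \<Rightarrow> 'a^'n^'n"
  assumes "dedekind_domain TYPE('a)"
    and "is_maximal_ideal M"
    and "finite_index M"
    and "hat_mat M C"
  shows "\<forall>f \<in> (Int_K_Mn TYPE('n) :: 'a fract poly set). \<forall>(g :: 'a poly) (d :: 'a).
           d \<noteq> 0 \<and> f = smult (inverse (to_fract d)) (map_poly to_fract g)
           \<longrightarrow> frac_val_in_hat_alg M g d C"
proof (intro ballI allI impI)
  fix f :: "'a fract poly" and g :: "'a poly" and d :: 'a
  assume f: "f \<in> Int_K_Mn TYPE('n)"
    and fd: "d \<noteq> 0 \<and> f = smult (inverse (to_fract d)) (map_poly to_fract g)"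
  have noeth: "noetherian_ring TYPE('a)"
    using assms(1) by (simp add: dedekind_domain_def)
  have M: "is_ideal M"
    using assms(2) by (simp add: is_maximal_ideal_def)
  have "d dvd poly_mat g B $ i $ j" for B :: "'a^'n^'n" and i j
    using Int_K_Mn_dvd[OF f] fd by blast
  then show "frac_val_in_hat_alg M g d C"
    by (rule frac_val_in_hat_alg_if_dvd[OF noeth M assms(3,4)])
qed

end
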